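(* Let $H$ be a real symmetric positive definite $d\times d$ matrix and $L$ a real $d\times d$ matrix with $L^TH+HL=0$. Let $s>4$ be even and consider the $s$-stage explicit Runge–Kutta method applied to $\frac{d}{dt}u=Lu$, $u_{n+1}=G_s u_n$ with $G_s=\sum_{k=0}^s a_k(hL)^k$, $a_0=1$, where $a_k=\frac{1}{k!}$ for $k=1,\dots,s-2$, $a_{s-1}=\frac{3}{(s+2)!}-\frac{3}{(s+1)!}+\frac{1}{(s-1)!}$, and $a_s=\frac{3}{(s+2)!}-\frac{3}{(s+1)!}+\frac{1}{s!}$. Then the method has order $p=s-2$ and order of energy accuracy $r=s+3$.
   Context: The order $p$ of the method is the largest integer such that $a_k=1/k!$ for all $1\le k\le p$. For $0\le k\le s$, $b_k=\sum_{i=\max(0,2k-s)}^{\min(2k,s)}(-1)^{k+i}a_i a_{2k-i}$, so that the energy $\mathcal{E}=\tfrac12\langle u,Hu\rangle$ satisfies $\mathcal{E}_{n+1}=\mathcal{E}_n+\tfrac12\sum_{k=1}^s b_k h^{2k}\|L^k u_n\|_H^2$. The leading index $m$ is the smallest $k\ge1$ with $b_k\ne0$ and the order of energy accuracy is $r=2m-1$. *)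

theory Defs
  imports "HOL-Analysis.Analysis"
begin

text \<open>Order p of an s-stage method with stability polynomial coefficients a_0..a_s:
  the largest p (with p \<le> s, since only a_0..a_s are defined) such that a_k = 1/k! for 1 \<le> k \<le> p.\<close>
definition rk_order :: "(nat \<Rightarrow> real) \<Rightarrow> nat \<Rightarrow> nat" where
  "rk_order a s = (GREATEST p. p \<le> s \<and> (\<forall>k\<in>{1..p}. a k = 1 / fact k))"

definition energy_coeff :: "(nat \<Rightarrow> real) \<Rightarrow> nat \<Rightarrow> nat \<Rightarrow> real" where
  "energy_coeff a s k =
     (\<Sum>i = max 0 (2*k - s) .. min (2*k) s. (-1) ^ (k + i) * a i * a (2*k - i))"

definition energy_leading_index :: "(nat \<Rightarrow> real) \<Rightarrow> nat \<Rightarrow> nat" where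
  "energy_leading_index a s = (LEAST k. 1 \<le> k \<and> k \<le> s \<and> energy_coeff a s k \<noteq> 0)"

definition energy_order :: "(nat \<Rightarrow> real) \<Rightarrow> nat \<Rightarrow> nat" where
  "energy_order a s = 2 * energy_leading_index a s - 1"

definition prop4_coeff :: "nat \<Rightarrow> nat \<Rightarrow> real" where
  "prop4_coeff s k =
     (if k = 0 then 1
      else if k \<le> s - 2 then 1 / fact k
      else if k = s - 1 then 3 / fact (s + 2) - 3 / fact (s + 1) + 1 / fact (s - 1)
      else if k = s then 3 / fact (s + 2) - 3 / fact (s + 1) + 1 / fact s
      else 0)"

end

theory Submission
  imports Defs
begin

(* Write a_i = 1/i! + e_i, so e_i = 0 for i <= p = s - 2.  If 2k <= 2p + 1, every product
   a_i a_(2k-i) in b_k has one factor with index at most p, so e_i e_(2k-i) drops out; the purely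
   exponential part cancels by the alternating binomial sum, and the two mixed parts agree after
   reflecting i to 2k - i.  Hence b_k = 2 (-1)^k T(2k) with T(m) = sum_i (-1)^i e_(m-i) / i!, the
   m-th coefficient of exp(-z) (A(z) - exp z).  T(m) = 0 for m <= p, T(s) = 0 as e_(s-1) = e_s,
   T(s+2) = 0 is what the factor 3 in a_(s-1) and a_s is chosen for, and
   T(s+4) = (s-1)(s+1)(s+3) / (15 (s+4)!) > 0.  So m = s/2 + 2 and r = s + 3.  Only for s = 6
   does 2m = 2s - 2 exceed 2p + 1; there b_5 is evaluated directly. *)

lemma sum_alternating_inverse_fact_products:
  assumes "0 < m"
  shows "(\<Sum>i=0..m. (-1)^i * (1 / fact i) * (1 / fact (m - i)) :: 'a :: field_char_0) = 0"
proof -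
  have "(\<Sum>i=0..m. (-1)^i * (1 / fact i) * (1 / fact (m - i)) :: 'a)
      = (\<Sum>i\<le>m. (-1)^i * of_nat (m choose i)) / fact m"
    unfolding sum_divide_distrib atLeast0AtMost
    by (intro sum.cong refl) (simp add: binomial_fact field_simps)
  also have "\<dots> = 0"
    using choose_alternating_sum[OF assms] by simp
  finally show ?thesis .
qed

lemma sum_alternating_convolution_reflect:
  fixes f g :: "nat \<Rightarrow> 'a :: comm_ring_1"
  assumes "even m"
  shows "(\<Sum>i=0..m. (-1)^i * f i * g (m - i)) = (\<Sum>i=0..m. (-1)^i * f (m - i) * g i)"
proof -
  have "(\<Sum>i=0..m. (-1)^i * f i * g (m - i)) = (\<Sum>i=0..m. (-1)^(m - i) * f (m - i) * g (m - (m - i)))"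
    by (subst sum.atLeastAtMost_rev) simp
  also have "\<dots> = (\<Sum>i=0..m. (-1)^i * f (m - i) * g i)"
  proof (intro sum.cong refl)
    fix i assume "i \<in> {0..m}"
    then have "i \<le> m" by simp
    with assms have "(-1 :: 'a)^(m - i) = (-1)^i"
      by (metis add_diff_cancel_left' even_add le_add_diff_inverse neg_one_even_power neg_one_odd_power)
    with \<open>i \<le> m\<close> show "(-1)^(m - i) * f (m - i) * g (m - (m - i)) = (-1)^i * f (m - i) * g i"
      by simp
  qed
  finally show ?thesis .
qed

definition exp_defect :: "(nat \<Rightarrow> real) \<Rightarrow> nat \<Rightarrow> real" where
  "exp_defect a i = a i - 1 / fact i"

definition defect_convolution :: "(nat \<Rightarrow> real) \<Rightarrow> nat \<Rightarrow> real" where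
  "defect_convolution a m = (\<Sum>i=0..m. (-1)^i / fact i * exp_defect a (m - i))"

lemma exp_defect_eq_0: "a i = 1 / fact i \<Longrightarrow> exp_defect a i = 0"
  by (simp add: exp_defect_def)

lemma energy_coeff_eq_defect_convolution:
  assumes vanish: "\<And>i. s < i \<Longrightarrow> a i = 0"
    and taylor: "\<And>i. i \<le> p \<Longrightarrow> a i = 1 / fact i"
    and "1 \<le> k" and "2 * k \<le> 2 * p + 1"
  shows "energy_coeff a s k = 2 * (-1)^k * defect_convolution a (2 * k)"
proof -
  define m where "m = 2 * k"
  define u :: "nat \<Rightarrow> real" where "u i = 1 / fact i" for i
  let ?e = "exp_defect a"
  have "energy_coeff a s k = (\<Sum>i=0..m. (-1)^(k + i) * a i * a (m - i))"
    unfolding energy_coeff_def m_def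
    by (rule sum.mono_neutral_left) (auto simp: vanish)
  also have "\<dots> = (-1)^k * ((\<Sum>i=0..m. (-1)^i * u i * u (m - i))
      + (\<Sum>i=0..m. (-1)^i * u i * ?e (m - i)) + (\<Sum>i=0..m. (-1)^i * ?e i * u (m - i)))"
    unfolding sum_distrib_left sum.distrib[symmetric]
  proof (intro sum.cong refl)
    fix i assume "i \<in> {0..m}"
    have "?e i * ?e (m - i) = 0"
      using assms(4) by (cases "i \<le> p") (auto simp: m_def exp_defect_eq_0 taylor)
    then have "a i * a (m - i) = u i * u (m - i) + u i * ?e (m - i) + ?e i * u (m - i)"
      by (simp add: exp_defect_def u_def algebra_simps)
    then have "(-1)^(k + i) * a i * a (m - i)
        = (-1)^k * (-1)^i * (u i * u (m - i) + u i * ?e (m - i) + ?e i * u (m - i))"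
      by (simp add: power_add)
    then show "(-1)^(k + i) * a i * a (m - i) = (-1)^k * ((-1)^i * u i * u (m - i)
        + (-1)^i * u i * ?e (m - i) + (-1)^i * ?e i * u (m - i))"
      by (simp add: algebra_simps)
  qed
  also have "\<dots> = 2 * (-1)^k * defect_convolution a m"
    using sum_alternating_inverse_fact_products[of m]
      sum_alternating_convolution_reflect[of m ?e u] assms(3)
    by (simp add: m_def u_def defect_convolution_def)
  finally show ?thesis by (simp add: m_def)
qed

lemma defect_convolution_eq_0:
  assumes "\<And>i. i \<le> p \<Longrightarrow> a i = 1 / fact i" and "m \<le> p"
  shows "defect_convolution a m = 0"
  unfolding defect_convolution_def using assms by (intro sum.neutral) (auto simp: exp_defect_eq_0)

lemma defect_convolution_eq_initial_sum:
  assumes "\<And>i. i \<le> p \<Longrightarrow> a i = 1 / fact i" and "m = p + 1 + j"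
  shows "defect_convolution a m = (\<Sum>i=0..j. (-1)^i / fact i * exp_defect a (m - i))"
  unfolding defect_convolution_def
  using assms by (intro sum.mono_neutral_right) (auto simp: exp_defect_eq_0)

lemma rk_order_eqI:
  assumes "p \<le> s" and "\<And>k. 1 \<le> k \<Longrightarrow> k \<le> p \<Longrightarrow> a k = 1 / fact k"
    and "p < s \<Longrightarrow> a (Suc p) \<noteq> 1 / fact (Suc p)"
  shows "rk_order a s = p"
  unfolding rk_order_def
proof (rule Greatest_equality)
  show "p \<le> s \<and> (\<forall>k\<in>{1..p}. a k = 1 / fact k)"
    using assms(1,2) by auto
  fix q assume q: "q \<le> s \<and> (\<forall>k\<in>{1..q}. a k = 1 / fact k)"
  show "q \<le> p"
  proof (rule ccontr)
    assume "\<not> q \<le> p"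
    with q have "p < s" and "a (Suc p) = 1 / fact (Suc p)" by auto
    with assms(3) show False by blast
  qed
qed

lemma energy_leading_index_eqI:
  assumes "1 \<le> m" "m \<le> s" "energy_coeff a s m \<noteq> 0"
    and "\<And>k. 1 \<le> k \<Longrightarrow> k < m \<Longrightarrow> energy_coeff a s k = 0"
  shows "energy_leading_index a s = m"
  unfolding energy_leading_index_def
  by (rule Least_equality) (use assms not_less in blast)+

lemma prop4_coeff_eq_inverse_fact: "i \<le> s - 2 \<Longrightarrow> prop4_coeff s i = 1 / fact i"
  by (simp add: prop4_coeff_def)

lemma prop4_coeff_eq_0: "s < i \<Longrightarrow> prop4_coeff s i = 0"
  by (auto simp: prop4_coeff_def)

lemma exp_defect_prop4_coeff:
  assumes "2 \<le> s"
  shows "exp_defect (prop4_coeff s) (s - 1) = 3 / fact (s + 2) - 3 / fact (s + 1)"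
    and "exp_defect (prop4_coeff s) s = 3 / fact (s + 2) - 3 / fact (s + 1)"
    and "0 < j \<Longrightarrow> exp_defect (prop4_coeff s) (s + j) = - 1 / fact (s + j)"
  using assms by (auto simp: exp_defect_def prop4_coeff_def)

lemma prop4_coeff_ne_inverse_fact: "2 \<le> s \<Longrightarrow> prop4_coeff s (s - 1) \<noteq> 1 / fact (s - 1)"
proof -
  assume "2 \<le> s"
  have "fact (s + 1) < (fact (s + 2) :: real)"
    by (rule fact_less_mono) auto
  then have "3 / fact (s + 2) \<noteq> (3 / fact (s + 1) :: real)"
    by (simp add: fact_gt_zero)
  with exp_defect_prop4_coeff(1)[OF \<open>2 \<le> s\<close>] show ?thesis
    by (auto simp: exp_defect_def)
qed

lemma defect_convolution_prop4_coeff_s: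
  assumes "2 \<le> s"
  shows "defect_convolution (prop4_coeff s) s = 0"
proof -
  have "defect_convolution (prop4_coeff s) s
      = (\<Sum>i=0..1. (-1)^i / fact i * exp_defect (prop4_coeff s) (s - i))"
    by (rule defect_convolution_eq_initial_sum[of "s - 2"])
      (use assms in \<open>auto simp: prop4_coeff_eq_inverse_fact\<close>)
  then show ?thesis
    using exp_defect_prop4_coeff[OF assms] by simp
qed

lemma defect_convolution_prop4_coeff_s_plus_2:
  assumes "2 \<le> s"
  shows "defect_convolution (prop4_coeff s) (s + 2) = 0"
proof -
  let ?e = "exp_defect (prop4_coeff s)"
  have "defect_convolution (prop4_coeff s) (s + 2)
      = (\<Sum>i=0..3. (-1)^i / fact i * ?e (s + 2 - i))"
    by (rule defect_convolution_eq_initial_sum[of "s - 2"])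
      (use assms in \<open>auto simp: prop4_coeff_eq_inverse_fact\<close>)
  also have "\<dots> = ?e (s + 2) - ?e (s + 1) + ?e s / 2 - ?e (s - 1) / 6"
    by (simp add: numeral_eq_Suc fact_numeral)
  also have "\<dots> = 0"
    unfolding exp_defect_prop4_coeff(1,2)[OF assms]
      exp_defect_prop4_coeff(3)[OF assms, of 1, OF zero_less_one]
      exp_defect_prop4_coeff(3)[OF assms, of 2, OF zero_less_numeral]
    by (simp add: field_simps del: fact_Suc)
  finally show ?thesis .
qed

lemma defect_convolution_prop4_coeff_s_plus_4:
  assumes "2 \<le> s"
  shows "defect_convolution (prop4_coeff s) (s + 4)
    = (real s - 1) * (real s + 1) * (real s + 3) / (15 * fact (s + 4))"
proof -
  let ?e = "exp_defect (prop4_coeff s)"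
  define x where "x = real s"
  define F :: real where "F = fact (s + 1)"
  have nonzero: "x + 2 \<noteq> 0" "x + 3 \<noteq> 0" "x + 4 \<noteq> 0" "F \<noteq> 0"
    by (simp_all add: x_def F_def add_nonneg_eq_0_iff)
  have fact2: "fact (s + 2) = (x + 2) * F"
    by (simp add: x_def F_def)
  have fact3: "fact (s + 3) = (x + 3) * (x + 2) * F"
    using fact2 by (simp add: x_def numeral_eq_Suc algebra_simps)
  have fact4: "fact (s + 4) = (x + 4) * (x + 3) * (x + 2) * F"
    using fact3 by (simp add: x_def numeral_eq_Suc algebra_simps)
  have "defect_convolution (prop4_coeff s) (s + 4)
      = (\<Sum>i=0..5. (-1)^i / fact i * ?e (s + 4 - i))"
    by (rule defect_convolution_eq_initial_sum[of "s - 2"])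
      (use assms in \<open>auto simp: prop4_coeff_eq_inverse_fact\<close>)
  also have "\<dots> = ?e (s + 4) - ?e (s + 3) + ?e (s + 2) / 2 - ?e (s + 1) / 6
      + ?e s / 24 - ?e (s - 1) / 120"
    by (simp add: numeral_eq_Suc fact_numeral)
  also have "\<dots> = (x - 1) * (x + 1) * (x + 3) / (15 * ((x + 4) * (x + 3) * (x + 2) * F))"
    unfolding exp_defect_prop4_coeff(1,2)[OF assms]
      exp_defect_prop4_coeff(3)[OF assms, of 1, OF zero_less_one]
      exp_defect_prop4_coeff(3)[OF assms, of 2, OF zero_less_numeral]
      exp_defect_prop4_coeff(3)[OF assms, of 3, OF zero_less_numeral]
      exp_defect_prop4_coeff(3)[OF assms, of 4, OF zero_less_numeral]
      fact2 fact3 fact4 F_def[symmetric]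
    using nonzero by (simp add: divide_simps) (simp add: algebra_simps)
  finally show ?thesis
    by (simp add: fact4 x_def)
qed

lemma energy_coeff_prop4_coeff_6: "energy_coeff (prop4_coeff 6) 6 5 = - 5 / 442368"
  by (simp add: energy_coeff_def prop4_coeff_def numeral_eq_Suc sum.atLeast_Suc_atMost fact_numeral)

lemma energy_leading_index_prop4_coeff:
  assumes "even s" and "4 < s"
  shows "energy_leading_index (prop4_coeff s) s = s div 2 + 2"
proof (rule energy_leading_index_eqI)
  have energy_coeff_eq: "energy_coeff (prop4_coeff s) s k = 2 * (-1)^k * defect_convolution (prop4_coeff s) (2 * k)"
    if "1 \<le> k" "2 * k \<le> 2 * (s - 2) + 1" for k
    using energy_coeff_eq_defect_convolution[OF prop4_coeff_eq_0 prop4_coeff_eq_inverse_fact that] .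
  from assms obtain n where n: "s = 2 * n" "3 \<le> n"
    by (auto elim!: evenE)
  show "1 \<le> s div 2 + 2" and "s div 2 + 2 \<le> s"
    using n by auto
  show "energy_coeff (prop4_coeff s) s (s div 2 + 2) \<noteq> 0"
  proof (cases "n = 3")
    case True
    then show ?thesis
      using n energy_coeff_prop4_coeff_6 by simp
  next
    case False
    with n have idx: "s div 2 + 2 = n + 2" and arg: "2 * (n + 2) = s + 4"
      and "2 * (n + 2) \<le> 2 * (s - 2) + 1"
      by auto
    then have "energy_coeff (prop4_coeff s) s (n + 2)
        = 2 * (-1)^(n + 2) * defect_convolution (prop4_coeff s) (2 * (n + 2))"
      by (intro energy_coeff_eq) simp_all
    then have "energy_coeff (prop4_coeff s) s (s div 2 + 2)
        = 2 * (-1)^(n + 2) * defect_convolution (prop4_coeff s) (s + 4)"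
      unfolding idx arg .
    moreover have "defect_convolution (prop4_coeff s) (s + 4) > 0"
      using n by (subst defect_convolution_prop4_coeff_s_plus_4) simp_all
    ultimately show ?thesis
      by simp
  qed
  fix k assume k: "1 \<le> k" "k < s div 2 + 2"
  with n consider "2 * k \<le> s - 2" | "2 * k = s" | "2 * k = s + 2"
    by fastforce
  then have "defect_convolution (prop4_coeff s) (2 * k) = 0"
  proof cases
    case 1
    then show ?thesis
      using defect_convolution_eq_0 prop4_coeff_eq_inverse_fact by blast
  next
    case 2
    then show ?thesis
      using defect_convolution_prop4_coeff_s n by simp
  next
    case 3
    then show ?thesis
      using defect_convolution_prop4_coeff_s_plus_2 n by simp
  qed
  then show "energy_coeff (prop4_coeff s) s k = 0"
    using energy_coeff_eq k n by simp
qed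

lemma rk_order_prop4_coeff:
  assumes "2 \<le> s"
  shows "rk_order (prop4_coeff s) s = s - 2"
proof (rule rk_order_eqI)
  have "Suc (s - 2) = s - 1"
    using assms by simp
  then show "prop4_coeff s (Suc (s - 2)) \<noteq> 1 / fact (Suc (s - 2))"
    using prop4_coeff_ne_inverse_fact[OF assms] by simp
qed (simp_all add: prop4_coeff_eq_inverse_fact)

theorem proposition4:
  fixes s :: nat and H L :: "real ^ 'd ^ 'd"
  assumes "even s" and "s > 4"
    and "transpose H = H"
    and "\<forall>x. x \<noteq> 0 \<longrightarrow> x \<bullet> (H *v x) > 0"
    and "transpose L ** H + H ** L = 0"
  shows "rk_order (prop4_coeff s) s = s - 2 \<and> energy_order (prop4_coeff s) s = s + 3"
  \<comment> \<open>The hypotheses on H and L only give b_k its meaning as an energy increment;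
    the claim concerns the coefficients alone.\<close>
proof
  show "rk_order (prop4_coeff s) s = s - 2"
    using assms(2) by (intro rk_order_prop4_coeff) simp
  have "energy_leading_index (prop4_coeff s) s = s div 2 + 2"
    using assms(1,2) by (rule energy_leading_index_prop4_coeff)
  with assms(1) show "energy_order (prop4_coeff s) s = s + 3"
    by (auto simp: energy_order_def elim: evenE)
qed

end
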